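(* Let $X=[n]$, $\mathcal{A}\subseteq X^{(r)}$ and $\mathcal{B}=X^{(r)}\setminus\mathcal{A}$. Suppose that $\partial^{-t}\mathcal{A}$ and $\partial^{+t}\mathcal{B}$ are minimal for all integers $t>0$. Then $\mathcal{A}$ is isomorphic to an initial segment of the colexicographic order on $X^{(r)}$.
   Context: $X^{(r)}=\{B\subseteq[n]:|B|=r\}$. Lower shadow: $\partial\mathcal{F}=\partial^{-}\mathcal{F}=\{B: B\cup\{i\}\in\mathcal{F}\text{ for some } i\notin B\}$, and $\partial^{-t}\mathcal{F}=\partial(\partial^{-(t-1)}\mathcal{F})$. Upper shadow: $\partial^{+}\mathcal{F}=\{B\cup\{i\}: i\in[n]\setminus B,\ B\in\mathcal{F}\}$, and $\partial^{+t}\mathcal{F}=\partial^{+}(\partial^{+(t-1)}\mathcal{F})$. For $\mathcal{F}\subseteq X^{(r)}$, $\partial^{\pm t}\mathcal{F}$ is minimal if $|\partial^{\pm t}\mathcal{F}|\le|\partial^{\pm t}\mathcal{G}|$ for every $\mathcal{G}\subseteq X^{(r)}$ with $|\mathcal{G}|=|\mathcal{F}|$. Colexicographic order: $A<_{colex}B$ iff $\max(A\Delta B)\in B$. $\mathcal{A}$ is isomorphic to $\mathcal{C}$ if there is a permutation $\sigma$ of $[n]$ with $\{\sigma(A):A\in\mathcal{A}\}=\mathcal{C}$. *)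

theory Defs
  imports Main "HOL-Combinatorics.Permutations"
begin

definition layer :: "nat \<Rightarrow> nat \<Rightarrow> nat set set" where
  "layer n r = {B. B \<subseteq> {1..n} \<and> card B = r}"

definition lower_shadow :: "nat set set \<Rightarrow> nat set set" where
  "lower_shadow F = {B. \<exists>i. i \<notin> B \<and> insert i B \<in> F}"

definition upper_shadow :: "nat \<Rightarrow> nat set set \<Rightarrow> nat set set" where
  "upper_shadow n F = {insert i B | B i. B \<in> F \<and> i \<in> {1..n} - B}"

definition lower_shadow_iter :: "nat \<Rightarrow> nat set set \<Rightarrow> nat set set" where
  "lower_shadow_iter t F = (lower_shadow ^^ t) F"

definition upper_shadow_iter :: "nat \<Rightarrow> nat \<Rightarrow> nat set set \<Rightarrow> nat set set" where
  "upper_shadow_iter n t F = (upper_shadow n ^^ t) F"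

definition lower_shadow_minimal :: "nat \<Rightarrow> nat \<Rightarrow> nat \<Rightarrow> nat set set \<Rightarrow> bool" where
  "lower_shadow_minimal n r t F \<longleftrightarrow>
     (\<forall>G. G \<subseteq> layer n r \<and> card G = card F \<longrightarrow>
          card (lower_shadow_iter t F) \<le> card (lower_shadow_iter t G))"

definition upper_shadow_minimal :: "nat \<Rightarrow> nat \<Rightarrow> nat \<Rightarrow> nat set set \<Rightarrow> bool" where
  "upper_shadow_minimal n r t F \<longleftrightarrow>
     (\<forall>G. G \<subseteq> layer n r \<and> card G = card F \<longrightarrow>
          card (upper_shadow_iter n t F) \<le> card (upper_shadow_iter n t G))"

definition colex_less :: "nat set \<Rightarrow> nat set \<Rightarrow> bool" where
  "colex_less A B \<longleftrightarrow> A \<noteq> B \<and> Max ((A - B) \<union> (B - A)) \<in> B"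

definition colex_initial_segment :: "nat \<Rightarrow> nat \<Rightarrow> nat set set \<Rightarrow> bool" where
  "colex_initial_segment n r C \<longleftrightarrow>
     C \<subseteq> layer n r \<and> (\<forall>B\<in>C. \<forall>A\<in>layer n r. colex_less A B \<longrightarrow> A \<in> C)"

definition family_iso :: "nat \<Rightarrow> nat set set \<Rightarrow> nat set set \<Rightarrow> bool" where
  "family_iso n A C \<longleftrightarrow> (\<exists>\<sigma>. \<sigma> permutes {1..n} \<and> (\<lambda>S. \<sigma> ` S) ` A = C)"

end

(*
  Induction on n, with m = n - 1 and r = j + 1 (the cases r = 0 and r >= n are trivial).
  If |A| <= C(m, r), comparing the 1-shadow of A, which is its set of points, with that of a
  family of the same size inside [m] shows that some point of [n] lies in no member of A; after
  swapping it with n, A lives in [m]^(r), and the minimality of the shadows of A and of its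
  complement descends to [m]. Otherwise the complement B is smaller than the family of r-sets
  through n, and comparing the upper shadows of B in [n]^(m) shows that all members of B share
  a point; after swapping it with n, A consists of all of [m]^(r) together with the sets
  {n} + S for S in some family A' in [m]^(j), and the minimality hypotheses descend to A'.
  In both cases a colex initial segment for the smaller instance lifts to one for A.
*)
theory Submission
  imports Defs
begin

section \<open>Shadows at a given level\<close>

(* On subfamilies of layer n r these are the iterated shadows of order r - k (lower) and
   k - r (upper); see lower_shadow_iter_eq and upper_shadow_iter_eq. *)
definition lower_shadow_at :: "nat \<Rightarrow> nat set set \<Rightarrow> nat set set" where
  "lower_shadow_at k F = {S. card S = k \<and> (\<exists>T\<in>F. S \<subseteq> T)}"

definition upper_shadow_at :: "nat \<Rightarrow> nat \<Rightarrow> nat set set \<Rightarrow> nat set set" where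
  "upper_shadow_at n k F = {S. S \<subseteq> {1..n} \<and> card S = k \<and> (\<exists>T\<in>F. T \<subseteq> S)}"

definition family_image :: "(nat \<Rightarrow> nat) \<Rightarrow> nat set set \<Rightarrow> nat set set" where
  "family_image \<sigma> F = image \<sigma> ` F"

definition lower_shadows_minimal :: "nat \<Rightarrow> nat \<Rightarrow> nat set set \<Rightarrow> bool" where
  "lower_shadows_minimal n r A \<longleftrightarrow>
     (\<forall>k\<le>r. \<forall>G. G \<subseteq> layer n r \<and> card G = card A \<longrightarrow>
        card (lower_shadow_at k A) \<le> card (lower_shadow_at k G))"

definition upper_shadows_minimal :: "nat \<Rightarrow> nat \<Rightarrow> nat set set \<Rightarrow> bool" where
  "upper_shadows_minimal n r B \<longleftrightarrow>
     (\<forall>k\<ge>r. \<forall>G. G \<subseteq> layer n r \<and> card G = card B \<longrightarrow>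
        card (upper_shadow_at n k B) \<le> card (upper_shadow_at n k G))"

definition shadow_extremal :: "nat \<Rightarrow> nat \<Rightarrow> nat set set \<Rightarrow> bool" where
  "shadow_extremal n r A \<longleftrightarrow>
     A \<subseteq> layer n r \<and> lower_shadows_minimal n r A \<and> upper_shadows_minimal n r (layer n r - A)"

definition colex_isomorphic :: "nat \<Rightarrow> nat \<Rightarrow> nat set set \<Rightarrow> bool" where
  "colex_isomorphic n r A \<longleftrightarrow>
     (\<exists>\<sigma>. \<sigma> permutes {1..n} \<and> colex_initial_segment n r (family_image \<sigma> A))"

lemma layer_memD:
  assumes "S \<in> layer n r"
  shows "finite S" "S \<subseteq> {1..n}" "card S = r"
  using assms finite_subset[of S "{1..n}"] by (auto simp: layer_def)

lemma finite_layer: "finite (layer n r)"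
  by (rule finite_subset[of _ "Pow {1..n}"]) (auto simp: layer_def)

lemma card_layer: "card (layer n r) = n choose r"
  using n_subsets[of "{1..n}" r] by (simp add: layer_def)

lemma finite_upper_shadow_at: "finite (upper_shadow_at n k F)"
  by (rule finite_subset[of _ "Pow {1..n}"]) (auto simp: upper_shadow_at_def)

lemma lower_shadow_at_self:
  assumes "F \<subseteq> layer n r"
  shows "lower_shadow_at r F = F"
proof (intro equalityI subsetI)
  fix S assume "S \<in> lower_shadow_at r F"
  then obtain T where T: "T \<in> F" "S \<subseteq> T" "card S = r"
    by (auto simp: lower_shadow_at_def)
  moreover have "finite T" "card T = r"
    using T(1) assms layer_memD by blast+
  ultimately show "S \<in> F"
    using card_subset_eq by metis
next
  fix S assume "S \<in> F"
  then show "S \<in> lower_shadow_at r F"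
    using assms layer_memD(3) by (auto simp: lower_shadow_at_def)
qed

lemma lower_shadow_lower_shadow_at:
  assumes "F \<subseteq> layer n r" "k < r"
  shows "lower_shadow (lower_shadow_at (Suc k) F) = lower_shadow_at k F"
proof (intro equalityI subsetI)
  fix S assume "S \<in> lower_shadow (lower_shadow_at (Suc k) F)"
  then obtain i T where "i \<notin> S" "card (insert i S) = Suc k" "T \<in> F" "insert i S \<subseteq> T"
    by (auto simp: lower_shadow_def lower_shadow_at_def)
  moreover from this have "finite S"
    using assms(1) layer_memD(1)[of T n r] finite_subset[of S T] by auto
  ultimately show "S \<in> lower_shadow_at k F"
    by (auto simp: lower_shadow_at_def)
next
  fix S assume "S \<in> lower_shadow_at k F"
  then obtain T where T: "T \<in> F" "S \<subseteq> T" "card S = k"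
    by (auto simp: lower_shadow_at_def)
  have "finite T" "card T = r"
    using T(1) assms(1) layer_memD by blast+
  then obtain i where "i \<in> T" "i \<notin> S"
    using T assms(2) by (metis less_irrefl subsetI subset_antisym)
  moreover have "finite S"
    using \<open>finite T\<close> T(2) by (rule finite_subset[rotated])
  ultimately have "insert i S \<in> lower_shadow_at (Suc k) F"
    using T by (auto simp: lower_shadow_at_def)
  then show "S \<in> lower_shadow (lower_shadow_at (Suc k) F)"
    using \<open>i \<notin> S\<close> by (auto simp: lower_shadow_def)
qed

lemma lower_shadow_iter_eq:
  assumes "F \<subseteq> layer n r"
  shows "t \<le> r \<Longrightarrow> lower_shadow_iter t F = lower_shadow_at (r - t) F"
proof (induction t)
  case 0
  then show ?case
    using lower_shadow_at_self[OF assms] by (simp add: lower_shadow_iter_def)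
next
  case (Suc t)
  then have "lower_shadow_at (r - t) F = lower_shadow_at (Suc (r - Suc t)) F"
    by (simp add: Suc_diff_Suc)
  then show ?case
    using Suc lower_shadow_lower_shadow_at[OF assms, of "r - Suc t"]
    by (simp add: lower_shadow_iter_def)
qed

lemma upper_shadow_at_self:
  assumes "F \<subseteq> layer n r"
  shows "upper_shadow_at n r F = F"
proof (intro equalityI subsetI)
  fix S assume "S \<in> upper_shadow_at n r F"
  then obtain T where T: "T \<in> F" "T \<subseteq> S" "S \<subseteq> {1..n}" "card S = r"
    by (auto simp: upper_shadow_at_def)
  moreover have "finite S"
    using T(3) by (rule finite_subset) simp
  moreover have "card T = r"
    using T(1) assms layer_memD by blast
  ultimately show "S \<in> F"
    using card_subset_eq by metis
next
  fix S assume "S \<in> F"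
  then show "S \<in> upper_shadow_at n r F"
    using assms by (auto simp: upper_shadow_at_def layer_def)
qed

lemma upper_shadow_upper_shadow_at:
  assumes "F \<subseteq> layer n r" "r \<le> k"
  shows "upper_shadow n (upper_shadow_at n k F) = upper_shadow_at n (Suc k) F"
proof (intro equalityI subsetI)
  fix S assume "S \<in> upper_shadow n (upper_shadow_at n k F)"
  then obtain i S' T where "S = insert i S'" "i \<in> {1..n}" "i \<notin> S'" "S' \<subseteq> {1..n}"
      "card S' = k" "T \<in> F" "T \<subseteq> S'"
    by (auto simp: upper_shadow_def upper_shadow_at_def)
  moreover have "finite S'"
    using \<open>S' \<subseteq> {1..n}\<close> by (rule finite_subset) simp
  ultimately show "S \<in> upper_shadow_at n (Suc k) F"
    by (auto simp: upper_shadow_at_def)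
next
  fix S assume "S \<in> upper_shadow_at n (Suc k) F"
  then obtain T where T: "T \<in> F" "T \<subseteq> S" "S \<subseteq> {1..n}" "card S = Suc k"
    by (auto simp: upper_shadow_at_def)
  have "finite S"
    using T(3) by (rule finite_subset) simp
  have "card T = r"
    using T(1) assms(1) layer_memD by blast
  then obtain i where i: "i \<in> S" "i \<notin> T"
    using T assms(2) by (metis Suc_n_not_le_n subsetI subset_antisym)
  have "S - {i} \<in> upper_shadow_at n k F"
    using T i \<open>finite S\<close> by (auto simp: upper_shadow_at_def)
  moreover have "S = insert i (S - {i})" "i \<in> {1..n} - (S - {i})"
    using i T(3) by auto
  ultimately show "S \<in> upper_shadow n (upper_shadow_at n k F)"
    unfolding upper_shadow_def by blast
qed

lemma upper_shadow_iter_eq: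
  assumes "F \<subseteq> layer n r"
  shows "upper_shadow_iter n t F = upper_shadow_at n (r + t) F"
proof (induction t)
  case 0
  then show ?case
    using upper_shadow_at_self[OF assms] by (simp add: upper_shadow_iter_def)
next
  case (Suc t)
  then show ?case
    using upper_shadow_upper_shadow_at[OF assms, of "r + t"]
    by (simp add: upper_shadow_iter_def)
qed

lemma lower_shadows_minimalI:
  assumes "A \<subseteq> layer n r" "\<And>t. t > 0 \<Longrightarrow> lower_shadow_minimal n r t A"
  shows "lower_shadows_minimal n r A"
  unfolding lower_shadows_minimal_def
proof (intro allI impI)
  fix k G assume "k \<le> r" and "G \<subseteq> layer n r \<and> card G = card A"
  then have G: "G \<subseteq> layer n r" "card G = card A"
    by auto
  show "card (lower_shadow_at k A) \<le> card (lower_shadow_at k G)"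
  proof (cases "k = r")
    case True
    then show ?thesis
      using lower_shadow_at_self[OF assms(1)] lower_shadow_at_self[OF G(1)] G(2) by simp
  next
    case False
    then have "lower_shadow_minimal n r (r - k) A"
      using assms(2) \<open>k \<le> r\<close> by simp
    moreover have "lower_shadow_iter (r - k) F = lower_shadow_at k F" if "F \<subseteq> layer n r" for F
      using lower_shadow_iter_eq[OF that, of "r - k"] \<open>k \<le> r\<close> by simp
    ultimately show ?thesis
      using G assms(1) unfolding lower_shadow_minimal_def by metis
  qed
qed

lemma upper_shadows_minimalI:
  assumes "B \<subseteq> layer n r" "\<And>t. t > 0 \<Longrightarrow> upper_shadow_minimal n r t B"
  shows "upper_shadows_minimal n r B"
  unfolding upper_shadows_minimal_def
proof (intro allI impI)
  fix k G assume "r \<le> k" and "G \<subseteq> layer n r \<and> card G = card B"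
  then have G: "G \<subseteq> layer n r" "card G = card B"
    by auto
  show "card (upper_shadow_at n k B) \<le> card (upper_shadow_at n k G)"
  proof (cases "k = r")
    case True
    then show ?thesis
      using upper_shadow_at_self[OF assms(1)] upper_shadow_at_self[OF G(1)] G(2) by simp
  next
    case False
    then have "upper_shadow_minimal n r (k - r) B"
      using assms(2) \<open>r \<le> k\<close> by simp
    moreover have "upper_shadow_iter n (k - r) F = upper_shadow_at n k F" if "F \<subseteq> layer n r" for F
      using upper_shadow_iter_eq[OF that, of "k - r"] \<open>r \<le> k\<close> by simp
    ultimately show ?thesis
      using G assms(1) unfolding upper_shadow_minimal_def by metis
  qed
qed

section \<open>Relabelling the ground set\<close>

lemma family_image_comp: "family_image (f \<circ> g) F = family_image f (family_image g F)"
  by (auto simp: family_image_def image_comp)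

lemma card_family_image: "inj \<sigma> \<Longrightarrow> card (family_image \<sigma> F) = card F"
  unfolding family_image_def by (rule card_image) (simp add: inj_on_def inj_image_eq_iff)

lemma family_image_Diff: "inj \<sigma> \<Longrightarrow> family_image \<sigma> (F - G) = family_image \<sigma> F - family_image \<sigma> G"
  unfolding family_image_def by (rule image_set_diff) (simp add: inj_on_def inj_image_eq_iff)

lemma lower_shadow_at_family_image:
  assumes "inj \<sigma>"
  shows "lower_shadow_at k (family_image \<sigma> F) = family_image \<sigma> (lower_shadow_at k F)"
proof (intro equalityI subsetI)
  fix S assume "S \<in> lower_shadow_at k (family_image \<sigma> F)"
  then obtain T where "T \<in> F" "S \<subseteq> \<sigma> ` T" "card S = k"
    by (auto simp: lower_shadow_at_def family_image_def)
  moreover from this obtain S' where "S' \<subseteq> T" "S = \<sigma> ` S'"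
    by (auto simp: subset_image_iff)
  ultimately show "S \<in> family_image \<sigma> (lower_shadow_at k F)"
    using assms by (auto simp: lower_shadow_at_def family_image_def card_image inj_on_subset)
next
  fix S assume "S \<in> family_image \<sigma> (lower_shadow_at k F)"
  then show "S \<in> lower_shadow_at k (family_image \<sigma> F)"
    using assms by (auto simp: lower_shadow_at_def family_image_def card_image inj_on_subset)
qed

lemma family_image_id: "family_image id F = F"
  by (simp add: family_image_def)

context
  fixes \<sigma> :: "nat \<Rightarrow> nat" and n :: nat
  assumes perm: "\<sigma> permutes {1..n}"
begin

lemma inj_permutation: "inj \<sigma>"
  using perm by (rule permutes_inj)

lemma image_inv_permutation: "\<sigma> ` (inv \<sigma> ` S) = S"
  by (simp add: image_comp permutes_inv_o(1)[OF perm])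

lemma image_permutation_subset_iff: "\<sigma> ` S \<subseteq> {1..n} \<longleftrightarrow> S \<subseteq> {1..n}"
  using permutes_image[OF perm] inj_permutation inj_image_subset_iff by metis

lemma card_image_permutation: "card (\<sigma> ` S) = card S"
  using card_image inj_on_subset[OF inj_permutation subset_UNIV] by blast

lemma image_permutation_in_layer_iff: "\<sigma> ` S \<in> layer n r \<longleftrightarrow> S \<in> layer n r"
  by (simp only: layer_def mem_Collect_eq image_permutation_subset_iff card_image_permutation)

lemma upper_shadow_at_family_image:
  "upper_shadow_at n k (family_image \<sigma> F) = family_image \<sigma> (upper_shadow_at n k F)"
proof (intro equalityI subsetI)
  fix S assume "S \<in> upper_shadow_at n k (family_image \<sigma> F)"
  then obtain T where T: "T \<in> F" "\<sigma> ` T \<subseteq> S" "S \<subseteq> {1..n}" "card S = k"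
    by (auto simp: upper_shadow_at_def family_image_def)
  define S' where "S' = inv \<sigma> ` S"
  have "S = \<sigma> ` S'"
    unfolding S'_def image_inv_permutation ..
  then have "T \<subseteq> S'" "S' \<subseteq> {1..n}" "card S' = k"
    using T inj_image_subset_iff[OF inj_permutation] image_permutation_subset_iff
      card_image_permutation by metis+
  then have "S' \<in> upper_shadow_at n k F"
    using T(1) by (auto simp: upper_shadow_at_def)
  then show "S \<in> family_image \<sigma> (upper_shadow_at n k F)"
    using \<open>S = \<sigma> ` S'\<close> by (auto simp: family_image_def)
next
  fix S assume "S \<in> family_image \<sigma> (upper_shadow_at n k F)"
  then obtain S' T where "S = \<sigma> ` S'" "S' \<subseteq> {1..n}" "card S' = k" "T \<in> F" "T \<subseteq> S'"
    by (auto simp: upper_shadow_at_def family_image_def)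
  then show "S \<in> upper_shadow_at n k (family_image \<sigma> F)"
    using image_permutation_subset_iff card_image_permutation
    by (auto simp: upper_shadow_at_def family_image_def)
qed

lemma family_image_layer_subset: "F \<subseteq> layer n r \<Longrightarrow> family_image \<sigma> F \<subseteq> layer n r"
  using image_permutation_in_layer_iff by (auto simp: family_image_def)

end

lemma family_image_layer:
  assumes "\<sigma> permutes {1..n}"
  shows "family_image \<sigma> (layer n r) = layer n r"
proof
  show "family_image \<sigma> (layer n r) \<subseteq> layer n r"
    using assms by (rule family_image_layer_subset) simp
  have "layer n r = family_image \<sigma> (family_image (inv \<sigma>) (layer n r))"
    by (simp add: family_image_comp[symmetric] permutes_inv_o(1)[OF assms] family_image_id)
  also have "\<dots> \<subseteq> family_image \<sigma> (layer n r)"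
    using family_image_layer_subset[OF permutes_inv[OF assms], of "layer n r" r]
    by (auto simp: family_image_def)
  finally show "layer n r \<subseteq> family_image \<sigma> (layer n r)" .
qed

lemma shadow_extremal_family_image:
  assumes "\<sigma> permutes {1..n}" "shadow_extremal n r A"
  shows "shadow_extremal n r (family_image \<sigma> A)"
proof -
  have "layer n r - family_image \<sigma> A = family_image \<sigma> (layer n r - A)"
    using family_image_layer[OF assms(1)] family_image_Diff[OF inj_permutation[OF assms(1)]] by metis
  then show ?thesis
    using assms(2) family_image_layer_subset[OF assms(1)]
    unfolding shadow_extremal_def lower_shadows_minimal_def upper_shadows_minimal_def
    by (simp add: lower_shadow_at_family_image upper_shadow_at_family_image[OF assms(1)]
        card_family_image inj_permutation[OF assms(1)])
qed

section \<open>Splitting off the top point\<close>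

lemma top_notin_layer: "S \<in> layer m r \<Longrightarrow> Suc m \<notin> S"
  by (auto simp: layer_def)

lemma layer_subset_layer_Suc: "layer m r \<subseteq> layer (Suc m) r"
  by (auto simp: layer_def)

lemma interval_Suc_top: "{1..Suc m} = insert (Suc m) {1..m}"
  by auto

lemma layer_Suc_without_top: "S \<in> layer (Suc m) r \<Longrightarrow> Suc m \<notin> S \<Longrightarrow> S \<in> layer m r"
  unfolding layer_def interval_Suc_top by blast

lemma insert_top_in_layer_Suc:
  assumes "S \<in> layer m r"
  shows "insert (Suc m) S \<in> layer (Suc m) (Suc r)"
proof -
  have "card (insert (Suc m) S) = Suc r"
    using top_notin_layer[OF assms] layer_memD[OF assms] by simp
  moreover have "insert (Suc m) S \<subseteq> {1..Suc m}"
    using layer_memD(2)[OF assms] unfolding interval_Suc_top by blast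
  ultimately show ?thesis
    unfolding layer_def by blast
qed

lemma lower_shadow_at_subset_layer: "F \<subseteq> layer n r \<Longrightarrow> lower_shadow_at k F \<subseteq> layer n k"
  unfolding lower_shadow_at_def layer_def by blast

lemma upper_shadow_at_subset_layer: "upper_shadow_at n k F \<subseteq> layer n k"
  by (auto simp: upper_shadow_at_def layer_def)

lemma layer_Suc_Suc: "layer (Suc m) (Suc r) = layer m (Suc r) \<union> insert (Suc m) ` layer m r"
proof (intro equalityI subsetI)
  fix S assume S: "S \<in> layer (Suc m) (Suc r)"
  show "S \<in> layer m (Suc r) \<union> insert (Suc m) ` layer m r"
  proof (cases "Suc m \<in> S")
    case True
    then have "S - {Suc m} \<in> layer m r"
      using S layer_memD[OF S] by (auto simp: layer_def subset_iff le_Suc_eq)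
    moreover have "S = insert (Suc m) (S - {Suc m})"
      using True by auto
    ultimately show ?thesis
      by blast
  next
    case False
    then show ?thesis
      using S layer_Suc_without_top by blast
  qed
next
  fix S assume "S \<in> layer m (Suc r) \<union> insert (Suc m) ` layer m r"
  then show "S \<in> layer (Suc m) (Suc r)"
    using layer_subset_layer_Suc insert_top_in_layer_Suc by blast
qed

lemma inj_on_insert_top: "F \<subseteq> layer m r \<Longrightarrow> inj_on (insert (Suc m)) F"
  by (rule inj_onI) (metis insert_ident subsetD top_notin_layer)

lemma card_insert_top_image: "F \<subseteq> layer m r \<Longrightarrow> card (insert (Suc m) ` F) = card F"
  by (rule card_image) (rule inj_on_insert_top)

lemma card_Un_insert_top_image:
  assumes "X \<subseteq> layer m r" "Y \<subseteq> layer m j"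
  shows "card (X \<union> insert (Suc m) ` Y) = card X + card Y"
proof -
  have "X \<inter> insert (Suc m) ` Y = {}"
    using assms(1) top_notin_layer by blast
  moreover have "finite X" "finite Y"
    using finite_subset[OF assms(1) finite_layer] finite_subset[OF assms(2) finite_layer] .
  ultimately show ?thesis
    using card_Un_disjoint[of X "insert (Suc m) ` Y"] card_insert_top_image[OF assms(2)] by simp
qed

lemma layer_Diff_insert_top:
  assumes "A \<subseteq> layer m j"
  shows "layer (Suc m) (Suc j) - (layer m (Suc j) \<union> insert (Suc m) ` A)
    = insert (Suc m) ` (layer m j - A)"
proof -
  have "layer m (Suc j) \<inter> insert (Suc m) ` layer m j = {}"
    using top_notin_layer by blast
  then have "layer (Suc m) (Suc j) - (layer m (Suc j) \<union> insert (Suc m) ` A)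
      = insert (Suc m) ` layer m j - insert (Suc m) ` A"
    unfolding layer_Suc_Suc by blast
  also have "\<dots> = insert (Suc m) ` (layer m j - A)"
    using inj_on_image_set_diff[OF inj_on_insert_top[of "layer m j" m j] _ assms] by simp
  finally show ?thesis .
qed

lemma layer_Suc_decompose:
  assumes "A \<subseteq> layer (Suc m) (Suc j)" "\<forall>S \<in> layer (Suc m) (Suc j) - A. Suc m \<in> S"
  shows "A = layer m (Suc j) \<union> insert (Suc m) ` {S \<in> layer m j. insert (Suc m) S \<in> A}"
proof -
  have "layer m (Suc j) \<subseteq> A"
    using assms(2) layer_subset_layer_Suc top_notin_layer by blast
  then show ?thesis
    using assms(1) unfolding layer_Suc_Suc by blast
qed

lemma upper_shadow_at_Suc_Un:
  assumes "F \<subseteq> layer m (Suc j)" "Suc j \<le> k"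
  shows "upper_shadow_at (Suc m) k (F \<union> insert (Suc m) ` layer m j)
    = upper_shadow_at m k F \<union> {S. S \<subseteq> {1..Suc m} \<and> card S = k \<and> Suc m \<in> S}"
proof (intro equalityI subsetI)
  fix S assume "S \<in> upper_shadow_at (Suc m) k (F \<union> insert (Suc m) ` layer m j)"
  then obtain T where T: "S \<subseteq> {1..Suc m}" "card S = k" "T \<in> F \<union> insert (Suc m) ` layer m j" "T \<subseteq> S"
    by (auto simp: upper_shadow_at_def)
  show "S \<in> upper_shadow_at m k F \<union> {S. S \<subseteq> {1..Suc m} \<and> card S = k \<and> Suc m \<in> S}"
  proof (cases "Suc m \<in> S")
    case False
    then have "T \<in> F" "S \<subseteq> {1..m}"
      using T by (auto simp: subset_iff le_Suc_eq)
    then show ?thesis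
      using T by (auto simp: upper_shadow_at_def)
  qed (use T in auto)
next
  fix S assume S: "S \<in> upper_shadow_at m k F \<union> {S. S \<subseteq> {1..Suc m} \<and> card S = k \<and> Suc m \<in> S}"
  show "S \<in> upper_shadow_at (Suc m) k (F \<union> insert (Suc m) ` layer m j)"
  proof (cases "S \<in> upper_shadow_at m k F")
    case True
    then show ?thesis
      by (auto simp: upper_shadow_at_def)
  next
    case False
    then have S: "S \<subseteq> {1..Suc m}" "card S = k" "Suc m \<in> S"
      using S by auto
    have "finite S"
      using S(1) by (rule finite_subset) simp
    then have "j \<le> card (S - {Suc m})"
      using S assms(2) by simp
    then obtain T where T: "T \<subseteq> S - {Suc m}" "card T = j"
      by (rule obtain_subset_with_card_n)
    then have "T \<in> layer m j"
      using S(1) by (auto simp: layer_def subset_iff le_Suc_eq)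
    moreover have "insert (Suc m) T \<subseteq> S"
      using S(3) T(1) by blast
    ultimately show ?thesis
      using S unfolding upper_shadow_at_def by blast
  qed
qed

lemma card_upper_shadow_at_Suc_Un:
  assumes "F \<subseteq> layer m (Suc j)" "Suc j \<le> k"
  shows "card (upper_shadow_at (Suc m) k (F \<union> insert (Suc m) ` layer m j))
    = card (upper_shadow_at m k F) + card {S. S \<subseteq> {1..Suc m} \<and> card S = k \<and> Suc m \<in> S}"
proof -
  have "finite {S. S \<subseteq> {1..Suc m} \<and> card S = k \<and> Suc m \<in> S}"
    by (rule finite_subset[of _ "Pow {1..Suc m}"]) auto
  moreover have "upper_shadow_at m k F \<inter> {S. S \<subseteq> {1..Suc m} \<and> card S = k \<and> Suc m \<in> S} = {}"
    by (auto simp: upper_shadow_at_def)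
  ultimately show ?thesis
    unfolding upper_shadow_at_Suc_Un[OF assms] by (simp add: card_Un_disjoint finite_upper_shadow_at)
qed

lemma upper_shadow_at_insert_top:
  assumes "F \<subseteq> layer m j"
  shows "upper_shadow_at (Suc m) (Suc k) (insert (Suc m) ` F) = insert (Suc m) ` upper_shadow_at m k F"
proof (intro equalityI subsetI)
  fix S assume "S \<in> upper_shadow_at (Suc m) (Suc k) (insert (Suc m) ` F)"
  then obtain T where T: "S \<subseteq> {1..Suc m}" "card S = Suc k" "T \<in> F" "insert (Suc m) T \<subseteq> S"
    by (auto simp: upper_shadow_at_def)
  have "finite S"
    using T(1) by (rule finite_subset) simp
  moreover have "Suc m \<notin> T"
    using T(3) assms top_notin_layer by blast
  ultimately have "S - {Suc m} \<in> upper_shadow_at m k F"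
    using T by (auto simp: upper_shadow_at_def subset_iff le_Suc_eq intro!: bexI[of _ T])
  moreover have "S = insert (Suc m) (S - {Suc m})"
    using T(4) by auto
  ultimately show "S \<in> insert (Suc m) ` upper_shadow_at m k F"
    by blast
next
  fix S assume "S \<in> insert (Suc m) ` upper_shadow_at m k F"
  then obtain S' T where S': "S = insert (Suc m) S'" "S' \<subseteq> {1..m}" "card S' = k" "T \<in> F" "T \<subseteq> S'"
    by (auto simp: upper_shadow_at_def)
  moreover have "finite S'"
    using S'(2) by (rule finite_subset) simp
  moreover have "Suc m \<notin> S'"
    using S'(2) by auto
  ultimately show "S \<in> upper_shadow_at (Suc m) (Suc k) (insert (Suc m) ` F)"
    by (auto simp: upper_shadow_at_def)
qed

lemma lower_shadow_at_Suc_Un: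
  assumes "F \<subseteq> layer m j" "k \<le> j" "Suc j \<le> m"
  shows "lower_shadow_at (Suc k) (layer m (Suc j) \<union> insert (Suc m) ` F)
    = lower_shadow_at (Suc k) (layer m (Suc j)) \<union> insert (Suc m) ` lower_shadow_at k F"
proof (intro equalityI subsetI)
  fix S assume "S \<in> lower_shadow_at (Suc k) (layer m (Suc j) \<union> insert (Suc m) ` F)"
  then obtain T where T: "card S = Suc k" "T \<in> layer m (Suc j) \<union> insert (Suc m) ` F" "S \<subseteq> T"
    unfolding lower_shadow_at_def by blast
  show "S \<in> lower_shadow_at (Suc k) (layer m (Suc j)) \<union> insert (Suc m) ` lower_shadow_at k F"
  proof (cases "T \<in> layer m (Suc j)")
    case True
    then show ?thesis
      using T unfolding lower_shadow_at_def by blast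
  next
    case False
    then obtain T' where T': "T' \<in> F" "T = insert (Suc m) T'"
      using T(2) by blast
    have "T' \<in> layer m j"
      using T'(1) assms(1) by blast
    then have "finite T'" "T' \<subseteq> {1..m}"
      using layer_memD by blast+
    show ?thesis
    proof (cases "Suc m \<in> S")
      case True
      have "finite S"
        using T(3) T'(2) \<open>finite T'\<close> by (simp add: finite_subset)
      then have "card (S - {Suc m}) = k"
        using T(1) True by simp
      moreover have "S - {Suc m} \<subseteq> T'"
        using T(3) T'(2) by blast
      ultimately have "S - {Suc m} \<in> lower_shadow_at k F"
        using T'(1) unfolding lower_shadow_at_def by blast
      moreover have "S = insert (Suc m) (S - {Suc m})"
        using True by auto
      ultimately show ?thesis
        by blast
    next
      case False
      then have "S \<subseteq> {1..m}"
        using T(3) T'(2) \<open>T' \<subseteq> {1..m}\<close> by auto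
      then obtain U where "S \<subseteq> U" "U \<subseteq> {1..m}" "card U = Suc j"
        using exists_subset_between[of S "Suc j" "{1..m}"] T(1) assms(2,3) by auto
      then have "U \<in> layer m (Suc j)" "S \<subseteq> U"
        by (auto simp: layer_def)
      then show ?thesis
        using T(1) unfolding lower_shadow_at_def by blast
    qed
  qed
next
  fix S assume S: "S \<in> lower_shadow_at (Suc k) (layer m (Suc j)) \<union> insert (Suc m) ` lower_shadow_at k F"
  show "S \<in> lower_shadow_at (Suc k) (layer m (Suc j) \<union> insert (Suc m) ` F)"
  proof (cases "S \<in> lower_shadow_at (Suc k) (layer m (Suc j))")
    case True
    then show ?thesis
      unfolding lower_shadow_at_def by blast
  next
    case False
    then obtain S' T where S': "S = insert (Suc m) S'" "card S' = k" "T \<in> F" "S' \<subseteq> T"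
      using S unfolding lower_shadow_at_def by blast
    then have "T \<in> layer m j"
      using assms(1) by blast
    then have "finite S'" "Suc m \<notin> S'"
      using S'(4) finite_subset[OF S'(4) layer_memD(1)] top_notin_layer by blast+
    then have "card S = Suc k"
      using S'(1,2) by simp
    moreover have "S \<subseteq> insert (Suc m) T"
      using S'(1,4) by blast
    ultimately show ?thesis
      using S'(3) unfolding lower_shadow_at_def by blast
  qed
qed

section \<open>Colex initial segments\<close>

lemma colex_less_top_mem:
  assumes "colex_less A B" "A \<subseteq> {1..N}" "B \<subseteq> {1..N}" "N \<in> A"
  shows "N \<in> B"
proof (rule ccontr)
  assume "N \<notin> B"
  let ?D = "(A - B) \<union> (B - A)"
  have "finite ?D"
    using assms(2,3) by (simp add: finite_subset)
  then have "Max ?D = N"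
    using assms(2,3,4) \<open>N \<notin> B\<close> by (intro Max_eqI) auto
  then show False
    using assms(1) \<open>N \<notin> B\<close> unfolding colex_less_def by simp
qed

lemma colex_less_insert:
  assumes "finite A" "finite B" "x \<notin> A" "x \<notin> B"
  shows "colex_less (insert x A) (insert x B) \<longleftrightarrow> colex_less A B"
proof -
  have D: "(insert x A - insert x B) \<union> (insert x B - insert x A) = (A - B) \<union> (B - A)"
    using assms(3,4) by blast
  have "Max ((A - B) \<union> (B - A)) \<noteq> x" if "A \<noteq> B"
  proof -
    have "Max ((A - B) \<union> (B - A)) \<in> (A - B) \<union> (B - A)"
      using that assms(1,2) by (intro Max_in) auto
    then show ?thesis
      using assms(3,4) by blast
  qed
  then show ?thesis
    unfolding colex_less_def D using insert_ident[OF assms(3,4)] by auto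
qed

lemma colex_initial_segment_trivial:
  assumes "card (layer n r) \<le> 1" "A \<subseteq> layer n r"
  shows "colex_initial_segment n r A"
proof -
  have "B = C" if "B \<in> layer n r" "C \<in> layer n r" for B C
    using assms(1) that card_le_Suc0_iff_eq[OF finite_layer] by auto
  then show ?thesis
    using assms(2) unfolding colex_initial_segment_def colex_less_def by blast
qed

lemma colex_initial_segment_Suc:
  assumes "colex_initial_segment m r C"
  shows "colex_initial_segment (Suc m) r C"
  unfolding colex_initial_segment_def
proof (intro conjI ballI impI)
  show "C \<subseteq> layer (Suc m) r"
    using assms layer_subset_layer_Suc unfolding colex_initial_segment_def by blast
  fix B A assume B: "B \<in> C" and A: "A \<in> layer (Suc m) r" and less: "colex_less A B"
  have "B \<in> layer m r"
    using B assms unfolding colex_initial_segment_def by blast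
  then have "Suc m \<notin> A"
    using colex_less_top_mem[OF less] layer_memD(2) A layer_subset_layer_Suc top_notin_layer
    by blast
  then have "A \<in> layer m r"
    using A layer_Suc_without_top by blast
  then show "A \<in> C"
    using B less assms unfolding colex_initial_segment_def by blast
qed

lemma colex_initial_segment_Suc_insert:
  assumes "colex_initial_segment m j C"
  shows "colex_initial_segment (Suc m) (Suc j) (layer m (Suc j) \<union> insert (Suc m) ` C)"
  unfolding colex_initial_segment_def
proof (intro conjI ballI impI)
  have C: "C \<subseteq> layer m j"
    using assms unfolding colex_initial_segment_def by blast
  then show "layer m (Suc j) \<union> insert (Suc m) ` C \<subseteq> layer (Suc m) (Suc j)"
    unfolding layer_Suc_Suc by blast
  fix B A assume B: "B \<in> layer m (Suc j) \<union> insert (Suc m) ` C"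
    and A: "A \<in> layer (Suc m) (Suc j)" and less: "colex_less A B"
  show "A \<in> layer m (Suc j) \<union> insert (Suc m) ` C"
  proof (cases "Suc m \<in> A")
    case False
    then show ?thesis
      using A layer_Suc_without_top by blast
  next
    case True
    have "B \<in> layer (Suc m) (Suc j)"
      using B C unfolding layer_Suc_Suc by blast
    then have "Suc m \<in> B"
      using colex_less_top_mem[OF less] A True layer_memD(2) by blast
    then obtain b where b: "b \<in> layer m j" "b \<in> C" "B = insert (Suc m) b"
      using B C top_notin_layer by blast
    obtain a where a: "a \<in> layer m j" "A = insert (Suc m) a"
      using A True top_notin_layer unfolding layer_Suc_Suc by blast
    have "colex_less a b"
      using less colex_less_insert[of a b "Suc m"] a b layer_memD(1) top_notin_layer by blast
    then have "a \<in> C"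
      using assms a b unfolding colex_initial_segment_def by blast
    then show ?thesis
      using a by blast
  qed
qed

lemma card_layer_le_1: "r = 0 \<or> n \<le> r \<Longrightarrow> card (layer n r) \<le> 1"
  by (cases "n = r") (auto simp: card_layer binomial_eq_0)

lemma colex_isomorphic_trivial:
  assumes "card (layer n r) \<le> 1" "A \<subseteq> layer n r"
  shows "colex_isomorphic n r A"
  using colex_initial_segment_trivial[OF assms] permutes_id family_image_id
  unfolding colex_isomorphic_def by metis

lemma colex_isomorphic_Suc:
  assumes "colex_isomorphic m r A"
  shows "colex_isomorphic (Suc m) r A"
proof -
  obtain \<sigma> where "\<sigma> permutes {1..m}" "colex_initial_segment m r (family_image \<sigma> A)"
    using assms unfolding colex_isomorphic_def by blast
  moreover have "{1..m} \<subseteq> {1..Suc m}"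
    by auto
  ultimately show ?thesis
    unfolding colex_isomorphic_def using permutes_subset colex_initial_segment_Suc by blast
qed

lemma colex_isomorphic_Suc_insert:
  assumes "colex_isomorphic m j A"
  shows "colex_isomorphic (Suc m) (Suc j) (layer m (Suc j) \<union> insert (Suc m) ` A)"
proof -
  obtain \<sigma> where \<sigma>: "\<sigma> permutes {1..m}" "colex_initial_segment m j (family_image \<sigma> A)"
    using assms unfolding colex_isomorphic_def by blast
  have "\<sigma> (Suc m) = Suc m"
    using permutes_not_in[OF \<sigma>(1)] by simp
  then have "family_image \<sigma> (layer m (Suc j) \<union> insert (Suc m) ` A)
      = layer m (Suc j) \<union> insert (Suc m) ` family_image \<sigma> A"
    using family_image_layer[OF \<sigma>(1), of "Suc j"] by (simp add: family_image_def image_Un image_image)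
  moreover have "\<sigma> permutes {1..Suc m}"
    using \<sigma>(1) by (rule permutes_subset) auto
  ultimately show ?thesis
    using colex_initial_segment_Suc_insert[OF \<sigma>(2)] unfolding colex_isomorphic_def by metis
qed

lemma colex_isomorphic_family_image:
  assumes "\<tau> permutes {1..n}" "colex_isomorphic n r (family_image \<tau> A)"
  shows "colex_isomorphic n r A"
  using assms permutes_compose family_image_comp unfolding colex_isomorphic_def by metis

section \<open>Descent to a smaller ground set\<close>

lemma lower_shadow_at_1: "lower_shadow_at 1 F = (\<lambda>x. {x}) ` \<Union>F"
proof (intro equalityI subsetI)
  fix S assume "S \<in> lower_shadow_at 1 F"
  then obtain T where "card S = 1" "T \<in> F" "S \<subseteq> T"
    unfolding lower_shadow_at_def by blast
  then show "S \<in> (\<lambda>x. {x}) ` \<Union>F"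
    by (metis card_1_singletonE UnionI image_eqI insert_subset)
qed (auto simp: lower_shadow_at_def)

lemma card_lower_shadow_at_1: "card (lower_shadow_at 1 F) = card (\<Union>F)"
  unfolding lower_shadow_at_1 by (rule card_image) (simp add: inj_on_def)

lemma upper_shadow_at_co_singletons:
  assumes "F \<subseteq> Pow {1..Suc m}"
  shows "upper_shadow_at (Suc m) m F = (\<lambda>y. {1..Suc m} - {y}) ` {y \<in> {1..Suc m}. \<exists>T\<in>F. y \<notin> T}"
proof (intro equalityI subsetI)
  fix S assume "S \<in> upper_shadow_at (Suc m) m F"
  then obtain T where T: "S \<subseteq> {1..Suc m}" "card S = m" "T \<in> F" "T \<subseteq> S"
    unfolding upper_shadow_at_def by blast
  have "finite S"
    using T(1) by (rule finite_subset) simp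
  then have "card ({1..Suc m} - S) = 1"
    using T(1,2) by (simp add: card_Diff_subset)
  then obtain y where "{1..Suc m} - S = {y}"
    by (rule card_1_singletonE)
  then have "S = {1..Suc m} - {y}" "y \<in> {1..Suc m}" "y \<notin> T"
    using T(1,4) by blast+
  then show "S \<in> (\<lambda>y. {1..Suc m} - {y}) ` {y \<in> {1..Suc m}. \<exists>T\<in>F. y \<notin> T}"
    using T(3) by blast
next
  fix S assume "S \<in> (\<lambda>y. {1..Suc m} - {y}) ` {y \<in> {1..Suc m}. \<exists>T\<in>F. y \<notin> T}"
  then obtain y T where y: "S = {1..Suc m} - {y}" "y \<in> {1..Suc m}" "T \<in> F" "y \<notin> T"
    by blast
  moreover have "T \<subseteq> {1..Suc m}"
    using assms y(3) by blast
  moreover have "card S = m"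
    using y(1,2) by simp
  ultimately show "S \<in> upper_shadow_at (Suc m) m F"
    unfolding upper_shadow_at_def by blast
qed

lemma card_upper_shadow_at_co_singletons:
  assumes "F \<subseteq> Pow {1..Suc m}"
  shows "card (upper_shadow_at (Suc m) m F) = card {y \<in> {1..Suc m}. \<exists>T\<in>F. y \<notin> T}"
proof -
  have "inj_on (\<lambda>y. {1..Suc m} - {y}) {1..Suc m}"
    by (rule inj_onI) blast
  then show ?thesis
    unfolding upper_shadow_at_co_singletons[OF assms]
    by (rule card_image[OF inj_on_subset]) blast
qed

lemma lower_shadows_minimal_avoids_element:
  assumes "A \<subseteq> layer (Suc m) r" "lower_shadows_minimal (Suc m) r A" "1 \<le> r"
    and "card A \<le> card (layer m r)"
  shows "\<exists>x\<in>{1..Suc m}. \<forall>S\<in>A. x \<notin> S"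
proof -
  obtain G where G: "G \<subseteq> layer m r" "card G = card A"
    using obtain_subset_with_card_n[OF assms(4)] by metis
  then have "card (lower_shadow_at 1 A) \<le> card (lower_shadow_at 1 G)"
    using assms(2,3) layer_subset_layer_Suc unfolding lower_shadows_minimal_def by blast
  then have "card (\<Union>A) \<le> card (\<Union>G)"
    unfolding card_lower_shadow_at_1 .
  also have "\<dots> \<le> card {1..m}"
    using G(1) by (intro card_mono) (auto simp: layer_def)
  finally have "\<Union>A \<noteq> {1..Suc m}"
    by auto
  moreover have "\<Union>A \<subseteq> {1..Suc m}"
    using assms(1) by (auto simp: layer_def)
  ultimately show ?thesis
    by blast
qed

lemma upper_shadows_minimal_common_element:
  assumes "B \<subseteq> layer (Suc m) (Suc j)" "upper_shadows_minimal (Suc m) (Suc j) B" "Suc j \<le> m"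
    and "card B \<le> card (layer m j)"
  shows "\<exists>x\<in>{1..Suc m}. \<forall>S\<in>B. x \<in> S"
proof -
  obtain G where G: "G \<subseteq> layer m j" "card G = card B"
    using obtain_subset_with_card_n[OF assms(4)] by metis
  let ?G = "insert (Suc m) ` G"
  have G_layer: "?G \<subseteq> layer (Suc m) (Suc j)"
    using G(1) insert_top_in_layer_Suc by blast
  moreover have "card ?G = card B"
    using card_insert_top_image[OF G(1)] G(2) by simp
  ultimately have "card (upper_shadow_at (Suc m) m B) \<le> card (upper_shadow_at (Suc m) m ?G)"
    using assms(2,3) unfolding upper_shadows_minimal_def by blast
  moreover have "B \<subseteq> Pow {1..Suc m}" "?G \<subseteq> Pow {1..Suc m}"
    using assms(1) G_layer by (auto simp: layer_def)
  ultimately have "card {y \<in> {1..Suc m}. \<exists>T\<in>B. y \<notin> T} \<le> card {y \<in> {1..Suc m}. \<exists>T\<in>?G. y \<notin> T}"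
    by (simp add: card_upper_shadow_at_co_singletons)
  also have "\<dots> \<le> card {1..m}"
    by (rule card_mono) auto
  finally have "{y \<in> {1..Suc m}. \<exists>T\<in>B. y \<notin> T} \<noteq> {1..Suc m}"
    by auto
  then show ?thesis
    by blast
qed

(* In [m+1] the complement of A is its complement in [m] plus all r-sets through m+1, and the
   latter add the same sets to the upper shadows of every family of this shape. *)
lemma shadow_extremal_restrict:
  assumes "shadow_extremal (Suc m) (Suc j) A" "A \<subseteq> layer m (Suc j)"
  shows "shadow_extremal m (Suc j) A"
proof -
  let ?E = "insert (Suc m) ` layer m j"
  have "upper_shadows_minimal m (Suc j) (layer m (Suc j) - A)"
    unfolding upper_shadows_minimal_def
  proof (intro allI impI)
    fix k G assume k: "Suc j \<le> k" and "G \<subseteq> layer m (Suc j) \<and> card G = card (layer m (Suc j) - A)"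
    then have G: "G \<subseteq> layer m (Suc j)" "card G = card (layer m (Suc j) - A)"
      by auto
    have "layer (Suc m) (Suc j) - A = (layer m (Suc j) - A) \<union> ?E"
      using assms(2) top_notin_layer unfolding layer_Suc_Suc by blast
    then have minimal: "upper_shadows_minimal (Suc m) (Suc j) ((layer m (Suc j) - A) \<union> ?E)"
      using assms(1) unfolding shadow_extremal_def by simp
    have "G \<union> ?E \<subseteq> layer (Suc m) (Suc j)"
      using G(1) unfolding layer_Suc_Suc by blast
    moreover have "card (G \<union> ?E) = card ((layer m (Suc j) - A) \<union> ?E)"
      using G card_Un_insert_top_image[OF G(1), of "layer m j" j]
        card_Un_insert_top_image[of "layer m (Suc j) - A" m "Suc j" "layer m j" j]
      by simp
    ultimately have "card (upper_shadow_at (Suc m) k ((layer m (Suc j) - A) \<union> ?E))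
        \<le> card (upper_shadow_at (Suc m) k (G \<union> ?E))"
      using minimal k unfolding upper_shadows_minimal_def by blast
    then show "card (upper_shadow_at m k (layer m (Suc j) - A)) \<le> card (upper_shadow_at m k G)"
      using card_upper_shadow_at_Suc_Un[OF _ k] G(1) by simp
  qed
  moreover have "lower_shadows_minimal m (Suc j) A"
    using assms(1) layer_subset_layer_Suc
    unfolding shadow_extremal_def lower_shadows_minimal_def by blast
  ultimately show ?thesis
    using assms(2) unfolding shadow_extremal_def by blast
qed

(* The lift F |-> layer m (Suc j) + (insert (Suc m) ` F) adds a constant to the size and to
   every lower shadow, and insert (Suc m) commutes with upper shadows, so the comparisons made
   in [m+1] are exactly those required in [m]. *)
lemma shadow_extremal_restrict_top:
  assumes "shadow_extremal (Suc m) (Suc j) (layer m (Suc j) \<union> insert (Suc m) ` A)"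
    and "A \<subseteq> layer m j" "Suc j \<le> m"
  shows "shadow_extremal m j A"
proof -
  let ?lift = "\<lambda>F. layer m (Suc j) \<union> insert (Suc m) ` F"
  have "lower_shadows_minimal m j A"
    unfolding lower_shadows_minimal_def
  proof (intro allI impI)
    fix k G assume k: "k \<le> j" and "G \<subseteq> layer m j \<and> card G = card A"
    then have G: "G \<subseteq> layer m j" "card G = card A"
      by auto
    have card_lift: "card (lower_shadow_at (Suc k) (?lift F))
        = card (lower_shadow_at (Suc k) (layer m (Suc j))) + card (lower_shadow_at k F)"
      if "F \<subseteq> layer m j" for F
      unfolding lower_shadow_at_Suc_Un[OF that k assms(3)]
      using lower_shadow_at_subset_layer[OF order.refl] lower_shadow_at_subset_layer[OF that]
      by (rule card_Un_insert_top_image)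
    have "?lift G \<subseteq> layer (Suc m) (Suc j)"
      using G(1) unfolding layer_Suc_Suc by blast
    moreover have "card (?lift G) = card (?lift A)"
      using card_Un_insert_top_image[OF order.refl] G assms(2) by simp
    ultimately have "card (lower_shadow_at (Suc k) (?lift A)) \<le> card (lower_shadow_at (Suc k) (?lift G))"
      using assms(1) k unfolding shadow_extremal_def lower_shadows_minimal_def by simp
    then show "card (lower_shadow_at k A) \<le> card (lower_shadow_at k G)"
      using card_lift[OF G(1)] card_lift[OF assms(2)] by simp
  qed
  moreover have "upper_shadows_minimal m j (layer m j - A)"
    unfolding upper_shadows_minimal_def
  proof (intro allI impI)
    fix k G assume k: "j \<le> k" and "G \<subseteq> layer m j \<and> card G = card (layer m j - A)"
    then have G: "G \<subseteq> layer m j" "card G = card (layer m j - A)"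
      by auto
    have minimal: "upper_shadows_minimal (Suc m) (Suc j) (insert (Suc m) ` (layer m j - A))"
      using assms(1) layer_Diff_insert_top[OF assms(2)] unfolding shadow_extremal_def by simp
    have "insert (Suc m) ` G \<subseteq> layer (Suc m) (Suc j)"
      using G(1) insert_top_in_layer_Suc by blast
    moreover have "card (insert (Suc m) ` G) = card (insert (Suc m) ` (layer m j - A))"
      using card_insert_top_image[OF G(1)] card_insert_top_image[OF Diff_subset] G(2) by simp
    ultimately have "card (upper_shadow_at (Suc m) (Suc k) (insert (Suc m) ` (layer m j - A)))
        \<le> card (upper_shadow_at (Suc m) (Suc k) (insert (Suc m) ` G))"
      using minimal k unfolding upper_shadows_minimal_def by simp
    then show "card (upper_shadow_at m k (layer m j - A)) \<le> card (upper_shadow_at m k G)"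
      using upper_shadow_at_insert_top[OF G(1)] upper_shadow_at_insert_top[OF Diff_subset]
        card_insert_top_image[OF upper_shadow_at_subset_layer]
      by metis
  qed
  ultimately show ?thesis
    using assms(2) unfolding shadow_extremal_def by blast
qed

lemma transpose_image_top_iff:
  "Suc m \<in> transpose x (Suc m) ` S \<longleftrightarrow> x \<in> S"
  by (auto simp: transpose_def)

lemma shadow_extremal_move_below_top:
  assumes "shadow_extremal (Suc m) (Suc j) A" "card A \<le> card (layer m (Suc j))"
  shows "\<exists>\<tau>. \<tau> permutes {1..Suc m} \<and> shadow_extremal m (Suc j) (family_image \<tau> A)"
proof -
  have "A \<subseteq> layer (Suc m) (Suc j)" "lower_shadows_minimal (Suc m) (Suc j) A"
    using assms(1) unfolding shadow_extremal_def by blast+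
  then obtain x where x: "x \<in> {1..Suc m}" "\<forall>S\<in>A. x \<notin> S"
    using lower_shadows_minimal_avoids_element[OF _ _ _ assms(2)] by auto
  define \<tau> where "\<tau> = transpose x (Suc m)"
  have \<tau>: "\<tau> permutes {1..Suc m}"
    unfolding \<tau>_def using x(1) by (intro permutes_swap_id) auto
  have extremal: "shadow_extremal (Suc m) (Suc j) (family_image \<tau> A)"
    using \<tau> assms(1) by (rule shadow_extremal_family_image)
  have "family_image \<tau> A \<subseteq> layer m (Suc j)"
  proof
    fix S assume S: "S \<in> family_image \<tau> A"
    then obtain S0 where "S0 \<in> A" "S = \<tau> ` S0"
      unfolding family_image_def by blast
    then have "Suc m \<notin> S"
      using x(2) transpose_image_top_iff unfolding \<tau>_def by metis
    moreover have "S \<in> layer (Suc m) (Suc j)"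
      using S extremal unfolding shadow_extremal_def by blast
    ultimately show "S \<in> layer m (Suc j)"
      using layer_Suc_without_top by blast
  qed
  then show ?thesis
    using \<tau> shadow_extremal_restrict[OF extremal] by blast
qed

lemma shadow_extremal_move_onto_top:
  assumes "shadow_extremal (Suc m) (Suc j) A" "Suc j \<le> m" "card (layer m (Suc j)) < card A"
  shows "\<exists>\<tau> A'. \<tau> permutes {1..Suc m}
    \<and> family_image \<tau> A = layer m (Suc j) \<union> insert (Suc m) ` A' \<and> shadow_extremal m j A'"
proof -
  let ?B = "layer (Suc m) (Suc j) - A"
  have A: "A \<subseteq> layer (Suc m) (Suc j)"
    using assms(1) unfolding shadow_extremal_def by blast
  then have "card ?B = card (layer (Suc m) (Suc j)) - card A"
    using finite_subset[OF A finite_layer] by (simp add: card_Diff_subset)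
  then have "card ?B \<le> card (layer m j)"
    using assms(3) by (simp add: card_layer)
  then obtain x where x: "x \<in> {1..Suc m}" "\<forall>S\<in>?B. x \<in> S"
    using upper_shadows_minimal_common_element[OF Diff_subset] assms(1,2)
    unfolding shadow_extremal_def by blast
  define \<tau> where "\<tau> = transpose x (Suc m)"
  have \<tau>: "\<tau> permutes {1..Suc m}"
    unfolding \<tau>_def using x(1) by (intro permutes_swap_id) auto
  have extremal: "shadow_extremal (Suc m) (Suc j) (family_image \<tau> A)"
    using \<tau> assms(1) by (rule shadow_extremal_family_image)
  define A' where "A' = {S \<in> layer m j. insert (Suc m) S \<in> family_image \<tau> A}"
  have "\<forall>S \<in> family_image \<tau> ?B. Suc m \<in> S"
    using x(2) transpose_image_top_iff unfolding family_image_def \<tau>_def by blast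
  moreover have "layer (Suc m) (Suc j) - family_image \<tau> A = family_image \<tau> ?B"
    using family_image_layer[OF \<tau>] family_image_Diff[OF inj_permutation[OF \<tau>]] by metis
  ultimately have "family_image \<tau> A = layer m (Suc j) \<union> insert (Suc m) ` A'"
    using layer_Suc_decompose extremal unfolding shadow_extremal_def A'_def by simp
  moreover have "A' \<subseteq> layer m j"
    unfolding A'_def by blast
  ultimately show ?thesis
    using \<tau> shadow_extremal_restrict_top extremal assms(2) by metis
qed

lemma colex_isomorphic_if_shadow_extremal:
  "shadow_extremal n r A \<Longrightarrow> colex_isomorphic n r A"
proof (induction n arbitrary: r A)
  case 0
  have "card (layer 0 r) \<le> 1"
    by (rule card_layer_le_1) simp
  then show ?case
    using colex_isomorphic_trivial 0 unfolding shadow_extremal_def by blast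
next
  case (Suc m)
  show ?case
  proof (cases "r = 0 \<or> Suc m \<le> r")
    case True
    then have "card (layer (Suc m) r) \<le> 1"
      by (rule card_layer_le_1)
    then show ?thesis
      using colex_isomorphic_trivial Suc.prems unfolding shadow_extremal_def by blast
  next
    case False
    then obtain j where r: "r = Suc j" "Suc j \<le> m"
      by (cases r) auto
    show ?thesis
    proof (cases "card A \<le> card (layer m r)")
      case True
      then obtain \<tau> where \<tau>: "\<tau> permutes {1..Suc m}" "shadow_extremal m r (family_image \<tau> A)"
        using shadow_extremal_move_below_top Suc.prems unfolding r(1) by blast
      then have "colex_isomorphic (Suc m) r (family_image \<tau> A)"
        using Suc.IH colex_isomorphic_Suc by blast
      then show ?thesis
        using \<tau>(1) by (rule colex_isomorphic_family_image[rotated])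
    next
      case False
      then obtain \<tau> A' where \<tau>: "\<tau> permutes {1..Suc m}" "shadow_extremal m j A'"
          "family_image \<tau> A = layer m (Suc j) \<union> insert (Suc m) ` A'"
        using shadow_extremal_move_onto_top[of m j A] Suc.prems r by auto
      then have "colex_isomorphic (Suc m) r (family_image \<tau> A)"
        using Suc.IH colex_isomorphic_Suc_insert r(1) by simp
      then show ?thesis
        using \<tau>(1) by (rule colex_isomorphic_family_image[rotated])
    qed
  qed
qed

theorem corollary7:
  fixes n r :: nat and A B :: "nat set set"
  assumes "A \<subseteq> layer n r"
    and "B = layer n r - A"
    and "\<And>t. t > 0 \<Longrightarrow> lower_shadow_minimal n r t A"
    and "\<And>t. t > 0 \<Longrightarrow> upper_shadow_minimal n r t B"
  shows "\<exists>C. colex_initial_segment n r C \<and> family_iso n A C"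
proof -
  have "lower_shadows_minimal n r A"
    using assms(1,3) by (rule lower_shadows_minimalI)
  moreover have "upper_shadows_minimal n r B"
    using assms(2,4) by (intro upper_shadows_minimalI) auto
  ultimately have "colex_isomorphic n r A"
    using assms(1,2) colex_isomorphic_if_shadow_extremal unfolding shadow_extremal_def by blast
  then show ?thesis
    unfolding colex_isomorphic_def family_iso_def family_image_def by blast
qed

end
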